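(* For every positive constant $c$ there exist a map oracle $f$ and a deterministic exploration algorithm $A$ such that, for all sufficiently large $n$ and every $n$-node graph $G$, the advice $f(G)$ has length at most $\lfloor \log\log\log n - c\rfloor$ (logarithms to base 2), and the agent executing $A$ with input $f(G)$, starting from any node of $G$, visits all nodes of $G$ and stops after at most $Q(n)$ edge traversals, where $Q$ is a polynomial (depending only on $c$).
   Context: Model: a graph is a simple connected undirected graph with $n$ nodes. Nodes are unlabeled; at each node of degree $d$ the incident edges carry distinct port numbers $0,\dots,d-1$, assigned arbitrarily (independently at the two endpoints of an edge). A mobile agent starts at some node $v$. At each step, located at a node $u$ whose degree it knows, it chooses a port $i$ at $u$ and traverses the corresponding edge to a neighbor $w$; upon arrival it learns the port number $j$ of this edge at $w$ and the degree of $w$. The agent must visit all nodes and stop. The time of exploration is the number of edge traversals. A deterministic exploration algorithm receives as input a finite binary string called advice; the size of advice is its length. A map oracle is a function assigning a binary string $f(G)$ to each port-numbered graph $G$ (it does not depend on the starting node). An instance oracle is a function assigning a binary string $f(G,v)$ to each pair $(G,v)$, where $v$ is the starting node of the agent in $G$. *)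

theory Defs
  imports Complex_Main "HOL-Computational_Algebra.Polynomial"
begin

text \<open>The nodes are 0..<pg_n (these names are only for
modelling; the agent never sees them). pg_deg v is the degree of v;
pg_succ v i is the neighbour reached from v through port i (for i < pg_deg v);
pg_rport v i is the port number of that same edge at the other endpoint.\<close>

record pgraph =
  pg_n :: nat
  pg_deg :: "nat \<Rightarrow> nat"
  pg_succ :: "nat \<Rightarrow> nat \<Rightarrow> nat"
  pg_rport :: "nat \<Rightarrow> nat \<Rightarrow> nat"

definition pg_edges :: "pgraph \<Rightarrow> (nat \<times> nat) set" where
  "pg_edges G = {(u, pg_succ G u i) | u i. u < pg_n G \<and> i < pg_deg G u}"

definition valid_pgraph :: "pgraph \<Rightarrow> bool" where
  "valid_pgraph G \<longleftrightarrow>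
     pg_n G \<ge> 1 \<and>
     (\<forall>v < pg_n G. \<forall>i < pg_deg G v.
        pg_succ G v i < pg_n G \<and>
        pg_succ G v i \<noteq> v \<and>
        pg_rport G v i < pg_deg G (pg_succ G v i) \<and>
        pg_succ G (pg_succ G v i) (pg_rport G v i) = v \<and>
        pg_rport G (pg_succ G v i) (pg_rport G v i) = i) \<and>
     (\<forall>v < pg_n G. inj_on (pg_succ G v) {..<pg_deg G v}) \<and>
     (\<forall>v < pg_n G. (0, v) \<in> (pg_edges G)\<^sup>*)"

text \<open>History of the agent: list of (port taken, port of entry at arrival node,
degree of arrival node). A deterministic algorithm gets the advice, the degree
of the starting node and the history, and outputs None (stop) or Some i (take port i).\<close>
type_synonym history = "(nat \<times> nat \<times> nat) list"
type_synonym algorithm = "bool list \<Rightarrow> nat \<Rightarrow> history \<Rightarrow> nat option"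

fun exec :: "algorithm \<Rightarrow> bool list \<Rightarrow> pgraph \<Rightarrow> nat \<Rightarrow> nat \<Rightarrow> nat \<times> history" where
  "exec A adv G v 0 = (v, [])"
| "exec A adv G v (Suc k) =
     (let (u, h) = exec A adv G v k in
      case A adv (pg_deg G v) h of
        None \<Rightarrow> (u, h)
      | Some i \<Rightarrow> (pg_succ G u i, h @ [(i, pg_rport G u i, pg_deg G (pg_succ G u i))]))"

definition explores_in :: "algorithm \<Rightarrow> bool list \<Rightarrow> pgraph \<Rightarrow> nat \<Rightarrow> nat \<Rightarrow> bool" where
  "explores_in A adv G v T \<longleftrightarrow>
     (\<forall>k < T. \<exists>i. A adv (pg_deg G v) (snd (exec A adv G v k)) = Some i \<and>
                   i < pg_deg G (fst (exec A adv G v k))) \<and>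
     A adv (pg_deg G v) (snd (exec A adv G v T)) = None \<and>
     {fst (exec A adv G v k) | k. k \<le> T} = {..<pg_n G}"

end

theory Submission
  imports Defs "HOL-Library.FuncSet"
begin

text \<open>Let the advice encode the index \<open>j\<close> of the least \<open>M = 2^2^(j D)\<close> with \<open>n \<le> M\<close>,
where \<open>D \<ge> 2^(c+2)\<close> is a constant: then \<open>j\<close> needs about \<open>log log log n - c\<close> bits, while
\<open>M \<le> n^(2^D)\<close> is polynomial in \<open>n\<close>. From \<open>M\<close> alone the agent computes a universal
exploration sequence for all graphs with at most \<open>M\<close> nodes, of length polynomial in \<open>M\<close>,
and follows it (taking port \<open>s\<^sub>k mod deg\<close> at step \<open>k\<close>). Such a sequence exists by counting:
the fraction of port sequences along which the walk from \<open>x\<close> misses \<open>v\<close> equals the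
probability that a random walk misses \<open>v\<close>; this drops below \<open>1/2\<close> within \<open>2 M^6\<close> steps
(commute-time argument along a shortest path) and hence decays geometrically, while the
walks on graphs with at most \<open>M\<close> nodes are determined by at most \<open>2^(M^3+M^2+3M)\<close>
codes, start nodes and targets.\<close>

section \<open>Walks along port sequences\<close>

definition walk_step :: "pgraph \<Rightarrow> nat \<Rightarrow> nat \<Rightarrow> nat" where
  "walk_step G x c = pg_succ G x (c mod pg_deg G x)"

fun walk_nodes :: "pgraph \<Rightarrow> nat \<Rightarrow> nat list \<Rightarrow> nat list" where
  "walk_nodes G x [] = [x]"
| "walk_nodes G x (c # s) = x # walk_nodes G (walk_step G x c) s"

definition walk_end :: "pgraph \<Rightarrow> nat \<Rightarrow> nat list \<Rightarrow> nat" where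
  "walk_end G x s = last (walk_nodes G x s)"

fun walk_history :: "pgraph \<Rightarrow> nat \<Rightarrow> nat list \<Rightarrow> history" where
  "walk_history G x [] = []"
| "walk_history G x (c # s) =
     (c mod pg_deg G x, pg_rport G x (c mod pg_deg G x), pg_deg G (walk_step G x c))
       # walk_history G (walk_step G x c) s"

lemma walk_nodes_not_Nil [simp]: "walk_nodes G x s \<noteq> []"
  by (cases s) auto

lemma start_in_walk_nodes: "x \<in> set (walk_nodes G x s)"
  by (cases s) auto

lemma walk_end_Nil [simp]: "walk_end G x [] = x"
  by (simp add: walk_end_def)

lemma walk_end_Cons [simp]: "walk_end G x (c # s) = walk_end G (walk_step G x c) s"
  by (simp add: walk_end_def)

lemma walk_end_snoc: "walk_end G x (s @ [c]) = walk_step G (walk_end G x s) c"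
  by (induction s arbitrary: x) auto

lemma walk_history_snoc:
  "walk_history G x (s @ [c]) = walk_history G x s @
     [(c mod pg_deg G (walk_end G x s), pg_rport G (walk_end G x s) (c mod pg_deg G (walk_end G x s)),
       pg_deg G (walk_step G (walk_end G x s) c))]"
  by (induction s arbitrary: x) auto

lemma length_walk_history [simp]: "length (walk_history G x s) = length s"
  by (induction s arbitrary: x) auto

lemma last_walk_history_deg:
  "s \<noteq> [] \<Longrightarrow> snd (snd (last (walk_history G x s))) = pg_deg G (walk_end G x s)"
proof (induction s arbitrary: x)
  case (Cons c s)
  then show ?case by (cases s) auto
qed simp

lemma set_walk_nodes: "set (walk_nodes G x s) = {walk_end G x (take k s) | k. k \<le> length s}"
proof (induction s arbitrary: x)
  case (Cons c s)
  have "{walk_end G x (take k (c # s)) | k. k \<le> length (c # s)} =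
        insert x {walk_end G (walk_step G x c) (take k s) | k. k \<le> length s}"
  proof (intro set_eqI iffI)
    fix y assume "y \<in> {walk_end G x (take k (c # s)) | k. k \<le> length (c # s)}"
    then obtain k where "k \<le> Suc (length s)" "y = walk_end G x (take k (c # s))" by auto
    then show "y \<in> insert x {walk_end G (walk_step G x c) (take k s) | k. k \<le> length s}"
      by (cases k) auto
  next
    fix y assume "y \<in> insert x {walk_end G (walk_step G x c) (take k s) | k. k \<le> length s}"
    then consider "y = x" | k where "k \<le> length s" "y = walk_end G (walk_step G x c) (take k s)"
      by auto
    then show "y \<in> {walk_end G x (take k (c # s)) | k. k \<le> length (c # s)}"
    proof cases
      case 1
      then show ?thesis by (intro CollectI exI[of _ 0]) auto
    next
      case (2 k)
      then show ?thesis by (intro CollectI exI[of _ "Suc k"]) auto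
    qed
  qed
  then show ?case using Cons by simp
qed simp

lemma valid_pgraph_succ:
  assumes "valid_pgraph G" "x < pg_n G" "i < pg_deg G x"
  shows "pg_succ G x i < pg_n G" "pg_succ G x i \<noteq> x"
    "pg_rport G x i < pg_deg G (pg_succ G x i)"
    "pg_succ G (pg_succ G x i) (pg_rport G x i) = x"
  using assms unfolding valid_pgraph_def by auto

lemma pg_edges_subset: "valid_pgraph G \<Longrightarrow> pg_edges G \<subseteq> {..<pg_n G} \<times> {..<pg_n G}"
  unfolding pg_edges_def using valid_pgraph_succ(1) by blast

lemma card_pg_edges_le: "valid_pgraph G \<Longrightarrow> card (pg_edges G) \<le> pg_n G * pg_n G"
  using card_mono[OF _ pg_edges_subset, of G] by (simp add: card_cartesian_product)

lemma pg_edges_sym: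
  assumes "valid_pgraph G" "(a, b) \<in> pg_edges G"
  shows "(b, a) \<in> pg_edges G"
proof -
  obtain i where i: "a < pg_n G" "i < pg_deg G a" "b = pg_succ G a i"
    using assms(2) unfolding pg_edges_def by auto
  note succ = valid_pgraph_succ[OF assms(1) i(1,2)]
  show ?thesis unfolding pg_edges_def i(3)
    by (rule CollectI, rule exI[of _ "pg_succ G a i"], rule exI[of _ "pg_rport G a i"])
       (use succ in auto)
qed

lemma pg_deg_less:
  assumes "valid_pgraph G" "x < pg_n G"
  shows "pg_deg G x < pg_n G"
proof -
  have inj: "inj_on (pg_succ G x) {..<pg_deg G x}"
    using assms unfolding valid_pgraph_def by auto
  have "pg_succ G x ` {..<pg_deg G x} \<subseteq> {..<pg_n G} - {x}"
    using valid_pgraph_succ[OF assms] by auto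
  from card_inj_on_le[OF inj this] have "pg_deg G x \<le> pg_n G - 1"
    using assms by simp
  then show ?thesis using assms by linarith
qed

lemma pg_reachable:
  assumes G: "valid_pgraph G" and "x < pg_n G" "v < pg_n G"
  shows "(x, v) \<in> (pg_edges G)\<^sup>*"
proof -
  have sym: "(b, a) \<in> (pg_edges G)\<^sup>*" if "(a, b) \<in> (pg_edges G)\<^sup>*" for a b
    using that
  proof induction
    case (step y z)
    then show ?case using pg_edges_sym[OF G] by (meson converse_rtrancl_into_rtrancl)
  qed simp
  have "(0, x) \<in> (pg_edges G)\<^sup>*" "(0, v) \<in> (pg_edges G)\<^sup>*"
    using assms unfolding valid_pgraph_def by auto
  then show ?thesis using sym by (metis rtrancl_trans)
qed

lemma pg_short_path:
  assumes "valid_pgraph G" "x < pg_n G" "v < pg_n G"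
  obtains k where "k \<le> pg_n G * pg_n G" "(x, v) \<in> pg_edges G ^^ k"
proof -
  have "finite (pg_edges G)"
    using pg_edges_subset[OF assms(1)] finite_subset by blast
  then have "(x, v) \<in> (\<Union>k\<in>{k. k \<le> card (pg_edges G)}. pg_edges G ^^ k)"
    using pg_reachable[OF assms] rtrancl_finite_eq_relpow by blast
  then obtain k where "k \<le> card (pg_edges G)" "(x, v) \<in> pg_edges G ^^ k" by blast
  then show ?thesis using that card_pg_edges_le[OF assms(1)] le_trans by blast
qed

text \<open>With a single node all degrees are \<open>0\<close> and \<open>c mod 0 = c\<close> would take a nonexistent port.\<close>

abbreviation nontrivial_pgraph :: "pgraph \<Rightarrow> bool" where
  "nontrivial_pgraph G \<equiv> valid_pgraph G \<and> 2 \<le> pg_n G"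

lemma pg_deg_pos:
  assumes "nontrivial_pgraph G" "x < pg_n G"
  shows "0 < pg_deg G x"
proof -
  define w :: nat where "w = (if x = 0 then 1 else 0)"
  have w: "w < pg_n G" "w \<noteq> x" using assms unfolding w_def by auto
  have "(x, w) \<in> (pg_edges G)\<^sup>*" using pg_reachable assms w by blast
  then obtain y where "(x, y) \<in> pg_edges G" using w(2)
    by (blast elim: converse_rtranclE)
  then obtain i where "i < pg_deg G x" unfolding pg_edges_def by blast
  then show ?thesis by simp
qed

lemma mod_pg_deg_less: "nontrivial_pgraph G \<Longrightarrow> x < pg_n G \<Longrightarrow> c mod pg_deg G x < pg_deg G x"
  using pg_deg_pos by simp

lemma walk_step_less: "nontrivial_pgraph G \<Longrightarrow> x < pg_n G \<Longrightarrow> walk_step G x c < pg_n G"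
  unfolding walk_step_def using valid_pgraph_succ(1) mod_pg_deg_less by blast

lemma walk_nodes_subset:
  "nontrivial_pgraph G \<Longrightarrow> x < pg_n G \<Longrightarrow> set (walk_nodes G x s) \<subseteq> {..<pg_n G}"
  by (induction s arbitrary: x) (auto simp: walk_step_less)

lemma walk_end_less: "nontrivial_pgraph G \<Longrightarrow> x < pg_n G \<Longrightarrow> walk_end G x s < pg_n G"
  using walk_nodes_subset[of G x s] last_in_set[OF walk_nodes_not_Nil]
  unfolding walk_end_def by blast

section \<open>Probability that a random walk avoids a node\<close>

text \<open>\<open>avoid_prob G v t x\<close> is the probability that the simple random walk of \<open>t\<close> steps
started at \<open>x\<close> never visits \<open>v\<close>.\<close>

fun avoid_prob :: "pgraph \<Rightarrow> nat \<Rightarrow> nat \<Rightarrow> nat \<Rightarrow> real" where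
  "avoid_prob G v 0 x = (if x = v then 0 else 1)"
| "avoid_prob G v (Suc t) x =
     (if x = v then 0 else (\<Sum>i<pg_deg G x. avoid_prob G v t (pg_succ G x i)) / pg_deg G x)"

lemma avoid_prob_target [simp]: "avoid_prob G v t v = 0"
  by (cases t) auto

lemma average_mono:
  "(\<And>i. i < d \<Longrightarrow> f i \<le> g i) \<Longrightarrow> (\<Sum>i<d. f i) / real d \<le> (\<Sum>i<d. g i) / real d"
  by (intro divide_right_mono sum_mono) auto

lemma avoid_prob_bounds:
  assumes G: "nontrivial_pgraph G" and "x < pg_n G"
  shows "0 \<le> avoid_prob G v t x \<and> avoid_prob G v t x \<le> 1"
  using assms(2)
proof (induction t arbitrary: x)
  case (Suc t)
  have "0 < pg_deg G x" using pg_deg_pos G Suc.prems by blast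
  moreover have "0 \<le> avoid_prob G v t (pg_succ G x i) \<and> avoid_prob G v t (pg_succ G x i) \<le> 1"
    if "i < pg_deg G x" for i
    using Suc.IH valid_pgraph_succ(1) G Suc.prems that by blast
  ultimately show ?case
    using average_mono[of "pg_deg G x" "\<lambda>_. 0" "\<lambda>i. avoid_prob G v t (pg_succ G x i)"]
      average_mono[of "pg_deg G x" "\<lambda>i. avoid_prob G v t (pg_succ G x i)" "\<lambda>_. 1"]
    by auto
qed simp

lemma avoid_prob_nonneg: "nontrivial_pgraph G \<Longrightarrow> x < pg_n G \<Longrightarrow> 0 \<le> avoid_prob G v t x"
  using avoid_prob_bounds by blast

lemma avoid_prob_le_1: "nontrivial_pgraph G \<Longrightarrow> x < pg_n G \<Longrightarrow> avoid_prob G v t x \<le> 1"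
  using avoid_prob_bounds by blast

lemma avoid_prob_Suc_le:
  assumes G: "nontrivial_pgraph G" and "x < pg_n G"
  shows "avoid_prob G v (Suc t) x \<le> avoid_prob G v t x"
  using assms(2)
proof (induction t arbitrary: x)
  case 0
  then show ?case using avoid_prob_le_1[OF G 0, of v "Suc 0"] by (cases "x = v") auto
next
  case (Suc t)
  have "(\<Sum>i<pg_deg G x. avoid_prob G v (Suc t) (pg_succ G x i)) / pg_deg G x
        \<le> (\<Sum>i<pg_deg G x. avoid_prob G v t (pg_succ G x i)) / pg_deg G x"
    by (rule average_mono) (use Suc.IH valid_pgraph_succ(1) G Suc.prems in blast)
  then show ?case by simp
qed

lemma avoid_prob_antimono:
  "nontrivial_pgraph G \<Longrightarrow> x < pg_n G \<Longrightarrow> t \<le> t' \<Longrightarrow> avoid_prob G v t' x \<le> avoid_prob G v t x"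
  using lift_Suc_antimono_le[of "\<lambda>t. avoid_prob G v t x"] avoid_prob_Suc_le by blast

text \<open>Each directed edge \<open>(x, i)\<close> is paired with its reverse, so summing over the endpoints
of all directed edges counts every node with multiplicity its degree.\<close>

lemma sum_over_ports:
  assumes G: "valid_pgraph G"
  shows "(\<Sum>x<pg_n G. \<Sum>i<pg_deg G x. F (pg_succ G x i)) = (\<Sum>y<pg_n G. real (pg_deg G y) * F y)"
proof -
  define P where "P = Sigma {..<pg_n G} (\<lambda>x. {..<pg_deg G x})"
  define rev where "rev = (\<lambda>(x, i). (pg_succ G x i, pg_rport G x i))"
  have rev_in: "rev p \<in> P" and rev_rev: "rev (rev p) = p" if "p \<in> P" for p
    using that G unfolding P_def rev_def valid_pgraph_def by auto
  have "(\<Sum>x<pg_n G. \<Sum>i<pg_deg G x. F (pg_succ G x i)) = (\<Sum>p\<in>P. F (pg_succ G (fst p) (snd p)))"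
    unfolding P_def by (simp add: sum.Sigma split_def)
  also have "\<dots> = (\<Sum>p\<in>P. F (pg_succ G (fst (rev p)) (snd (rev p))))"
    by (rule sum.reindex_bij_witness[of _ rev rev]) (use rev_in rev_rev in auto)
  also have "\<dots> = (\<Sum>p\<in>P. F (fst p))"
    by (rule sum.cong) (use valid_pgraph_succ(4)[OF G] in \<open>auto simp: P_def rev_def\<close>)
  also have "\<dots> = (\<Sum>x<pg_n G. \<Sum>i<pg_deg G x. F x)"
    unfolding P_def by (subst sum.Sigma) (auto simp: split_def)
  also have "\<dots> = (\<Sum>y<pg_n G. real (pg_deg G y) * F y)" by simp
  finally show ?thesis .
qed

definition avoid_potential :: "pgraph \<Rightarrow> nat \<Rightarrow> nat \<Rightarrow> real" where
  "avoid_potential G v t = (\<Sum>x<pg_n G. real (pg_deg G x) * avoid_prob G v t x)"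

lemma avoid_potential_Suc:
  assumes G: "nontrivial_pgraph G" and v: "v < pg_n G"
  shows "avoid_potential G v (Suc t) + (\<Sum>i<pg_deg G v. avoid_prob G v t (pg_succ G v i))
         = avoid_potential G v t"
proof -
  define h where "h x = (\<Sum>i<pg_deg G x. avoid_prob G v t (pg_succ G x i))" for x
  have "avoid_potential G v (Suc t) = (\<Sum>x<pg_n G. if x = v then 0 else h x)"
    unfolding avoid_potential_def h_def by (rule sum.cong) (use pg_deg_pos[OF G] in auto)
  also have "\<dots> + h v = (\<Sum>x<pg_n G. h x)"
    using v by (simp add: sum.If_cases Diff_eq[symmetric] sum.remove)
  also have "\<dots> = avoid_potential G v t"
    unfolding h_def avoid_potential_def using sum_over_ports G by blast
  finally show ?thesis unfolding h_def .
qed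

text \<open>The potential starts at most at \<open>n\<^sup>2\<close> and loses at least the avoidance probability
from each neighbour of \<open>v\<close> in every step; this is the commute-time bound for one edge.\<close>

lemma avoid_prob_neighbour:
  assumes G: "nontrivial_pgraph G" and v: "v < pg_n G" and i0: "i0 < pg_deg G v"
  shows "real T * avoid_prob G v T (pg_succ G v i0) \<le> real (pg_n G * pg_n G)"
proof -
  let ?y = "pg_succ G v i0"
  have y: "?y < pg_n G" using valid_pgraph_succ G v i0 by blast
  have nonneg: "x < pg_n G \<Longrightarrow> 0 \<le> avoid_prob G v t x" for x t
    using avoid_prob_nonneg G by blast
  have "0 \<le> avoid_potential G v T"
    unfolding avoid_potential_def by (rule sum_nonneg) (simp add: nonneg)
  have step: "avoid_prob G v t ?y \<le> avoid_potential G v t - avoid_potential G v (Suc t)" for t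
  proof -
    have "avoid_prob G v t ?y \<le> (\<Sum>i<pg_deg G v. avoid_prob G v t (pg_succ G v i))"
      by (rule member_le_sum[of i0 _ "\<lambda>i. avoid_prob G v t (pg_succ G v i)", simplified])
         (use i0 v valid_pgraph_succ(1) G nonneg in auto)
    then show ?thesis using avoid_potential_Suc[OF G v, of t] by linarith
  qed
  have "real T * avoid_prob G v T ?y = (\<Sum>t<T. avoid_prob G v T ?y)" by simp
  also have "\<dots> \<le> (\<Sum>t<T. avoid_prob G v t ?y)"
    by (rule sum_mono) (use avoid_prob_antimono[OF G y] in auto)
  also have "\<dots> \<le> (\<Sum>t<T. avoid_potential G v t - avoid_potential G v (Suc t))"
    by (rule sum_mono) (rule step)
  also have "\<dots> = avoid_potential G v 0 - avoid_potential G v T"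
    using sum_lessThan_telescope'[of "avoid_potential G v" T] by simp
  also have "\<dots> \<le> avoid_potential G v 0"
    using \<open>0 \<le> avoid_potential G v T\<close> by simp
  also have "\<dots> \<le> (\<Sum>x<pg_n G. real (pg_n G))"
    unfolding avoid_potential_def
    by (rule sum_mono) (use pg_deg_less[of G] G in \<open>auto simp: less_imp_le\<close>)
  also have "\<dots> = real (pg_n G * pg_n G)" by simp
  finally show ?thesis .
qed

lemma avoid_prob_via:
  assumes G: "nontrivial_pgraph G" and "x < pg_n G" and y: "y < pg_n G"
  shows "avoid_prob G v (a + b) x \<le> avoid_prob G y a x + avoid_prob G v b y"
  using assms(2)
proof (induction a arbitrary: x)
  case 0
  then show ?case
    using avoid_prob_le_1[OF G 0, of v b] avoid_prob_nonneg[OF G y, of v b] by simp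
next
  case (Suc a)
  consider "x = v" | "x = y" | "x \<noteq> v" "x \<noteq> y" by blast
  then show ?case
  proof cases
    case 1
    have "0 \<le> avoid_prob G y (Suc a) x" "0 \<le> avoid_prob G v b y"
      using avoid_prob_nonneg[OF G Suc.prems] avoid_prob_nonneg[OF G y] by blast+
    then show ?thesis using 1 by simp
  next
    case 2
    then show ?thesis using avoid_prob_antimono[OF G y, of b "Suc a + b" v] by simp
  next
    case 3
    have "0 < pg_deg G x" using pg_deg_pos G Suc.prems by blast
    have "avoid_prob G v (Suc a + b) x
          = (\<Sum>i<pg_deg G x. avoid_prob G v (a + b) (pg_succ G x i)) / pg_deg G x"
      using 3 by simp
    also have "\<dots> \<le> (\<Sum>i<pg_deg G x. avoid_prob G y a (pg_succ G x i) + avoid_prob G v b y) / pg_deg G x"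
      by (rule average_mono) (use Suc.IH valid_pgraph_succ(1) G Suc.prems in blast)
    also have "\<dots> = avoid_prob G y (Suc a) x + avoid_prob G v b y"
      using 3 \<open>0 < pg_deg G x\<close> by (simp add: sum.distrib add_divide_distrib)
    finally show ?thesis .
  qed
qed

lemma avoid_prob_add_le_mult:
  assumes G: "nontrivial_pgraph G" and "x < pg_n G"
    and B: "\<And>y. y < pg_n G \<Longrightarrow> avoid_prob G v b y \<le> B"
  shows "avoid_prob G v (a + b) x \<le> avoid_prob G v a x * B"
  using assms(2)
proof (induction a arbitrary: x)
  case 0
  then show ?case using B by (cases "x = v") auto
next
  case (Suc a)
  show ?case
  proof (cases "x = v")
    case False
    have "avoid_prob G v (Suc a + b) x
          = (\<Sum>i<pg_deg G x. avoid_prob G v (a + b) (pg_succ G x i)) / pg_deg G x"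
      using False by simp
    also have "\<dots> \<le> (\<Sum>i<pg_deg G x. avoid_prob G v a (pg_succ G x i) * B) / pg_deg G x"
      by (rule average_mono) (use Suc.IH valid_pgraph_succ(1) G Suc.prems in blast)
    also have "\<dots> = avoid_prob G v (Suc a) x * B"
      using False by (simp add: sum_distrib_right)
    finally show ?thesis .
  qed simp
qed

lemma avoid_prob_mult_le_power:
  assumes G: "nontrivial_pgraph G" and "x < pg_n G"
    and B: "\<And>y. y < pg_n G \<Longrightarrow> avoid_prob G v b y \<le> B" "0 \<le> B"
  shows "avoid_prob G v (r * b) x \<le> B ^ r"
  using assms(2)
proof (induction r arbitrary: x)
  case 0
  then show ?case using avoid_prob_le_1[OF G] by simp
next
  case (Suc r)
  have "avoid_prob G v (Suc r * b) x = avoid_prob G v (r * b + b) x"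
    by (simp add: add.commute)
  also have "\<dots> \<le> avoid_prob G v (r * b) x * B"
    by (rule avoid_prob_add_le_mult[OF G Suc.prems B(1)])
  also have "\<dots> \<le> B ^ r * B"
    by (rule mult_right_mono[OF Suc.IH[OF Suc.prems] B(2)])
  finally show ?case by (simp add: mult.commute)
qed

lemma avoid_prob_path:
  assumes G: "nontrivial_pgraph G" and "x < pg_n G" "(x, v) \<in> pg_edges G ^^ k" "0 < T"
  shows "avoid_prob G v (k * T) x \<le> real k * real (pg_n G * pg_n G) / real T"
  using assms(2,3)
proof (induction k arbitrary: x)
  case (Suc k)
  obtain y where xy: "(x, y) \<in> pg_edges G" and yv: "(y, v) \<in> pg_edges G ^^ k"
    using relpow_Suc_D2[OF Suc.prems(2)] by blast
  obtain i where i: "i < pg_deg G x" "y = pg_succ G x i"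
    using xy unfolding pg_edges_def by auto
  note succ = valid_pgraph_succ[OF conjunct1[OF G] Suc.prems(1) i(1)]
  have y: "y < pg_n G" using succ i by simp
  have "real T * avoid_prob G y T x \<le> real (pg_n G * pg_n G)"
    using avoid_prob_neighbour[OF G y, of "pg_rport G x i" T] succ i by simp
  then have edge: "avoid_prob G y T x \<le> real (pg_n G * pg_n G) / real T"
    using \<open>0 < T\<close> by (simp add: field_simps)
  have "avoid_prob G v (Suc k * T) x = avoid_prob G v (T + k * T) x" by simp
  also have "\<dots> \<le> avoid_prob G y T x + avoid_prob G v (k * T) y"
    by (rule avoid_prob_via[OF G Suc.prems(1) y])
  also have "\<dots> \<le> real (pg_n G * pg_n G) / real T + real k * real (pg_n G * pg_n G) / real T"
    using edge Suc.IH[OF y yv] by linarith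
  also have "\<dots> = real (Suc k) * real (pg_n G * pg_n G) / real T"
    by (simp add: add_divide_distrib algebra_simps)
  finally show ?case .
qed simp

definition halving_time :: "nat \<Rightarrow> nat" where
  "halving_time M = 2 * M ^ 6"

lemma avoid_prob_halving_time:
  assumes G: "nontrivial_pgraph G" and M: "pg_n G \<le> M" and "x < pg_n G" "v < pg_n G"
  shows "avoid_prob G v (halving_time M) x \<le> 1 / 2"
proof -
  obtain k where k: "k \<le> pg_n G * pg_n G" "(x, v) \<in> pg_edges G ^^ k"
    using pg_short_path[OF conjunct1[OF G] assms(3,4)] by blast
  have "1 \<le> M" using G M by linarith
  have nM: "pg_n G * pg_n G \<le> M * M" using mult_le_mono[OF M M] .
  have "k * (2 * M ^ 4) \<le> M * M * (2 * M ^ 4)"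
    using k(1) nM by (intro mult_le_mono1) linarith
  also have "\<dots> = halving_time M"
    unfolding halving_time_def by (simp add: power_numeral_reduce)
  finally have "k * (2 * M ^ 4) \<le> halving_time M" .
  then have "avoid_prob G v (halving_time M) x \<le> avoid_prob G v (k * (2 * M ^ 4)) x"
    by (rule avoid_prob_antimono[OF G assms(3)])
  also have "\<dots> \<le> real k * real (pg_n G * pg_n G) / real (2 * M ^ 4)"
    by (rule avoid_prob_path[OF G assms(3) k(2)]) (use \<open>1 \<le> M\<close> in simp)
  also have "\<dots> \<le> real (M * M) * real (M * M) / real (2 * M ^ 4)"
  proof -
    have "real k \<le> real (M * M)" "real (pg_n G * pg_n G) \<le> real (M * M)"
      using k(1) nM by (simp_all only: of_nat_le_iff)
    then show ?thesis by (intro divide_right_mono mult_mono) auto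
  qed
  also have "\<dots> = 1 / 2" using \<open>1 \<le> M\<close> by (simp add: field_simps power4_eq_xxxx)
  finally show ?thesis .
qed

lemma avoid_prob_geometric:
  assumes "nontrivial_pgraph G" "pg_n G \<le> M" "x < pg_n G" "v < pg_n G"
  shows "avoid_prob G v (r * halving_time M) x \<le> (1 / 2) ^ r"
  by (rule avoid_prob_mult_le_power[OF assms(1,3)])
     (use avoid_prob_halving_time[OF assms(1,2) _ assms(4)] in auto)

section \<open>Universal exploration sequences\<close>

definition words :: "nat \<Rightarrow> nat \<Rightarrow> nat list set" where
  "words L t = {s. set s \<subseteq> {..<L} \<and> length s = t}"

definition avoiding_words :: "pgraph \<Rightarrow> nat \<Rightarrow> nat \<Rightarrow> nat \<Rightarrow> nat \<Rightarrow> nat list set" where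
  "avoiding_words G v L t x = {s \<in> words L t. v \<notin> set (walk_nodes G x s)}"

lemma card_words: "card (words L t) = L ^ t"
  unfolding words_def using card_lists_length_eq[of "{..<L}" t] by simp

lemma finite_words: "finite (words L t)"
  unfolding words_def using finite_lists_length_eq[of "{..<L}" t] by simp

lemma words_Suc: "words L (Suc t) = (\<Union>c<L. Cons c ` words L t)"
proof (intro set_eqI iffI)
  fix s assume "s \<in> words L (Suc t)"
  then obtain c s' where "s = c # s'" "c < L" "s' \<in> words L t"
    unfolding words_def by (cases s) auto
  then show "s \<in> (\<Union>c<L. Cons c ` words L t)" by auto
qed (auto simp: words_def)

lemma avoiding_words_Suc:
  "x \<noteq> v \<Longrightarrow> avoiding_words G v L (Suc t) x = (\<Union>c<L. Cons c ` avoiding_words G v L t (walk_step G x c))"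
  unfolding avoiding_words_def words_Suc by auto

lemma sum_lessThan_mult_mod:
  fixes f :: "nat \<Rightarrow> real"
  assumes "0 < d"
  shows "(\<Sum>c<d * q. f (c mod d)) = real q * (\<Sum>i<d. f i)"
proof (induction q)
  case (Suc q)
  have "(\<Sum>c<d * Suc q. f (c mod d)) = (\<Sum>c<d * q. f (c mod d)) + (\<Sum>c\<in>{d * q..<d * q + d}. f (c mod d))"
    by (simp add: sum.atLeastLessThan_concat atLeast0LessThan[symmetric] add.commute)
  also have "(\<Sum>c\<in>{d * q..<d * q + d}. f (c mod d)) = (\<Sum>i<d. f i)"
    using sum.shift_bounds_nat_ivl[of "\<lambda>c. f (c mod d)" 0 "d * q" d]
    by (simp add: add.commute atLeast0LessThan)
  finally show ?case using Suc by (simp add: algebra_simps)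
qed simp

text \<open>If every degree divides the alphabet size \<open>L\<close>, a uniformly random letter selects a
uniformly random port, so counting avoiding words is the same as averaging over random walks.\<close>

lemma card_avoiding_words:
  assumes G: "nontrivial_pgraph G" and "x < pg_n G"
    and dvd: "\<And>y. y < pg_n G \<Longrightarrow> pg_deg G y dvd L"
  shows "real (card (avoiding_words G v L t x)) = real L ^ t * avoid_prob G v t x"
  using assms(2)
proof (induction t arbitrary: x)
  case 0
  have "avoiding_words G v L 0 x = (if x = v then {} else {[]})"
    unfolding avoiding_words_def words_def by auto
  then show ?case by simp
next
  case (Suc t)
  show ?case
  proof (cases "x = v")
    case True
    then show ?thesis using start_in_walk_nodes by (simp add: avoiding_words_def)
  next
    case False
    let ?d = "pg_deg G x"
    have d: "0 < ?d" using pg_deg_pos G Suc.prems by blast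
    obtain q where L: "L = ?d * q" using dvd[OF Suc.prems] by blast
    have fin: "finite (avoiding_words G v L t y)" for y
      unfolding avoiding_words_def using finite_words by simp
    have "card (avoiding_words G v L (Suc t) x) = (\<Sum>c<L. card (Cons c ` avoiding_words G v L t (walk_step G x c)))"
      unfolding avoiding_words_Suc[OF False] by (rule card_UN_disjoint) (auto simp: fin)
    then have "real (card (avoiding_words G v L (Suc t) x))
               = (\<Sum>c<L. real (card (avoiding_words G v L t (walk_step G x c))))"
      by (simp add: card_image)
    also have "\<dots> = (\<Sum>c<L. real L ^ t * avoid_prob G v t (pg_succ G x (c mod ?d)))"
      by (rule sum.cong) (use Suc.IH walk_step_less[OF G Suc.prems] in \<open>auto simp: walk_step_def\<close>)
    also have "\<dots> = real L ^ t * (real q * (\<Sum>i<?d. avoid_prob G v t (pg_succ G x i)))"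
      unfolding L sum_distrib_left[symmetric] by (rule arg_cong[OF sum_lessThan_mult_mod[OF d]])
    also have "\<dots> = real L ^ Suc t * avoid_prob G v (Suc t) x"
      using False d by (simp add: L)
    finally show ?thesis .
  qed
qed

text \<open>A code of \<open>G\<close> records \<open>n\<close>, the degrees and the neighbours, padded with zeros to the
fixed index sets \<open>{..<M}\<close> and \<open>{..<M} \<times> {..<M}\<close>; walks only depend on the code.\<close>

definition graph_code :: "nat \<Rightarrow> pgraph \<Rightarrow> nat \<times> (nat \<Rightarrow> nat) \<times> (nat \<times> nat \<Rightarrow> nat)" where
  "graph_code M G = (pg_n G, restrict (\<lambda>v. if v < pg_n G then pg_deg G v else 0) {..<M},
     restrict (\<lambda>(v, i). if v < pg_n G \<and> i < pg_deg G v then pg_succ G v i else 0) ({..<M} \<times> {..<M}))"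

definition graph_codes :: "nat \<Rightarrow> (nat \<times> (nat \<Rightarrow> nat) \<times> (nat \<times> nat \<Rightarrow> nat)) set" where
  "graph_codes M = {..M} \<times> (PiE {..<M} (\<lambda>_. {..M})) \<times> (PiE ({..<M} \<times> {..<M}) (\<lambda>_. {..<M}))"

lemma graph_code_in_graph_codes:
  assumes G: "valid_pgraph G" and M: "pg_n G \<le> M"
  shows "graph_code M G \<in> graph_codes M"
proof -
  have "1 \<le> pg_n G" using G by (simp add: valid_pgraph_def)
  have "(if v < pg_n G then pg_deg G v else 0) \<in> {..M}" for v
    using pg_deg_less[OF G, of v] M by auto
  moreover have "(if v < pg_n G \<and> i < pg_deg G v then pg_succ G v i else 0) \<in> {..<M}" for v i
    using valid_pgraph_succ(1)[OF G, of v i] \<open>1 \<le> pg_n G\<close> M by auto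
  ultimately show ?thesis
    unfolding graph_code_def graph_codes_def using M by (auto simp: restrict_PiE_iff)
qed

lemma graph_code_eqD:
  assumes code: "graph_code M G = graph_code M G'" and x: "x < pg_n G" "x < M"
  shows "pg_n G' = pg_n G" "pg_deg G' x = pg_deg G x"
    and "i < pg_deg G x \<Longrightarrow> i < M \<Longrightarrow> pg_succ G' x i = pg_succ G x i"
proof -
  show n: "pg_n G' = pg_n G"
    using arg_cong[OF code, of fst] by (simp add: graph_code_def)
  show d: "pg_deg G' x = pg_deg G x"
    using fun_cong[OF arg_cong[OF code, of "\<lambda>q. fst (snd q)"], of x] n x
    by (simp add: graph_code_def)
  show "pg_succ G' x i = pg_succ G x i" if "i < pg_deg G x" "i < M"
    using fun_cong[OF arg_cong[OF code, of "\<lambda>q. snd (snd q)"], of "(x, i)"] n d x that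
    by (simp add: graph_code_def)
qed

lemma walk_nodes_graph_code_eq:
  assumes G: "nontrivial_pgraph G" and M: "pg_n G \<le> M"
    and code: "graph_code M G = graph_code M G'" and "x < pg_n G"
  shows "walk_nodes G x s = walk_nodes G' x s"
  using assms(4)
proof (induction s arbitrary: x)
  case (Cons c s)
  have xM: "x < M" using Cons.prems M by simp
  have i: "c mod pg_deg G x < pg_deg G x" using mod_pg_deg_less[OF G Cons.prems] .
  moreover have "c mod pg_deg G x < M"
    using i pg_deg_less[OF conjunct1[OF G] Cons.prems] M by linarith
  ultimately have "walk_step G x c = walk_step G' x c"
    using graph_code_eqD[OF code Cons.prems xM] by (simp add: walk_step_def)
  then show ?case using Cons.IH[OF walk_step_less[OF G Cons.prems, of c]] by simp
qed simp

definition code_exponent :: "nat \<Rightarrow> nat" where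
  "code_exponent M = M * (M * M + M + 3)"

lemma card_graph_codes_targets_le:
  assumes "1 \<le> M"
  shows "card (graph_codes M \<times> {..<M} \<times> {..<M}) \<le> 2 ^ code_exponent M"
proof -
  have "card (graph_codes M \<times> {..<M} \<times> {..<M}) = (M + 1) * (M + 1) ^ M * M ^ (M * M) * (M * M)"
    unfolding graph_codes_def by (simp add: card_cartesian_product card_PiE algebra_simps)
  also have "\<dots> \<le> (M + 1) * (M + 1) ^ M * (M + 1) ^ (M * M) * ((M + 1) * (M + 1))"
    by (intro mult_le_mono power_mono) auto
  also have "\<dots> = (M + 1) ^ (M * M + M + 3)"
    by (simp add: power_add power3_eq_cube algebra_simps)
  also have "\<dots> \<le> (2 ^ M) ^ (M * M + M + 3)"
    by (rule power_mono) (use less_exp[of M] in \<open>auto simp: Suc_le_eq\<close>)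
  also have "\<dots> = 2 ^ code_exponent M"
    unfolding code_exponent_def by (simp add: power_mult)
  finally show ?thesis .
qed

definition avoiding_family :: "nat \<Rightarrow> nat \<Rightarrow> nat \<Rightarrow> nat list set set" where
  "avoiding_family M L t =
     {avoiding_words G v L t x | G x v. nontrivial_pgraph G \<and> pg_n G \<le> M \<and> x < pg_n G \<and> v < pg_n G}"

lemma avoiding_family_small:
  assumes "1 \<le> M"
  shows "finite (avoiding_family M L t) \<and> card (avoiding_family M L t) \<le> 2 ^ code_exponent M"
proof -
  define rep where "rep q = (SOME G. nontrivial_pgraph G \<and> pg_n G \<le> M \<and> graph_code M G = q)" for q
  define K where "K = graph_codes M \<times> {..<M} \<times> {..<M}"
  define g where "g = (\<lambda>(q, x, v). avoiding_words (rep q) v L t x)"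
  have sub: "avoiding_family M L t \<subseteq> g ` K"
  proof
    fix A assume "A \<in> avoiding_family M L t"
    then obtain G x v where G: "nontrivial_pgraph G" "pg_n G \<le> M" "x < pg_n G" "v < pg_n G"
      and A: "A = avoiding_words G v L t x"
      unfolding avoiding_family_def by blast
    let ?G' = "rep (graph_code M G)"
    have "nontrivial_pgraph ?G' \<and> pg_n ?G' \<le> M \<and> graph_code M ?G' = graph_code M G"
      unfolding rep_def by (rule someI[of _ G]) (use G in blast)
    then have "avoiding_words ?G' v L t x = A"
      unfolding A avoiding_words_def using walk_nodes_graph_code_eq[OF G(1,2) _ G(3)] by metis
    moreover have "(graph_code M G, x, v) \<in> K"
      unfolding K_def using graph_code_in_graph_codes G by auto
    ultimately show "A \<in> g ` K"
      unfolding g_def by (intro rev_image_eqI) auto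
  qed
  have K: "finite K" unfolding K_def graph_codes_def by (auto intro!: finite_PiE)
  have "card (avoiding_family M L t) \<le> card (g ` K)"
    by (rule card_mono[OF finite_imageI[OF K] sub])
  also have "\<dots> \<le> card K" by (rule card_image_le[OF K])
  also have "\<dots> \<le> 2 ^ code_exponent M"
    unfolding K_def by (rule card_graph_codes_targets_le[OF assms])
  finally show ?thesis using finite_subset[OF sub finite_imageI[OF K]] by blast
qed

lemma exists_not_in_Union:
  assumes "finite W" "finite F" "\<And>A. A \<in> F \<Longrightarrow> A \<subseteq> W \<and> real (card A) \<le> b"
    and "real (card F) * b < real (card W)"
  shows "\<exists>w \<in> W. w \<notin> \<Union>F"
proof (rule ccontr)
  assume "\<not> ?thesis"
  then have "W = \<Union>F" using assms(3) by blast
  then have "real (card W) \<le> (\<Sum>A\<in>F. real (card A))"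
    using card_Union_le_sum_card[of F] by (simp flip: of_nat_sum)
  also have "\<dots> \<le> real (card F) * b"
    using sum_bounded_above[of F "\<lambda>A. real (card A)" b] assms(3) by simp
  finally show False using assms(4) by simp
qed

definition universal_length :: "nat \<Rightarrow> nat" where
  "universal_length M = (code_exponent M + 1) * halving_time M"

definition universal_seq :: "nat \<Rightarrow> nat list \<Rightarrow> bool" where
  "universal_seq M s \<longleftrightarrow> s \<in> words (fact M) (universal_length M) \<and>
     (\<forall>G. nontrivial_pgraph G \<and> pg_n G \<le> M \<longrightarrow>
        (\<forall>x < pg_n G. \<forall>v < pg_n G. v \<in> set (walk_nodes G x s)))"

lemma card_avoiding_words_universal_length:
  assumes "nontrivial_pgraph G" "pg_n G \<le> M" "x < pg_n G" "v < pg_n G"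
  shows "real (card (avoiding_words G v (fact M) (universal_length M) x))
         \<le> real (fact M) ^ universal_length M / 2 ^ (code_exponent M + 1)"
proof -
  have "pg_deg G y dvd fact M" if "y < pg_n G" for y
  proof (rule dvd_fact)
    show "1 \<le> pg_deg G y" using pg_deg_pos[OF assms(1) that] by simp
    show "pg_deg G y \<le> M" using pg_deg_less[OF conjunct1[OF assms(1)] that] assms(2) by simp
  qed
  then have "real (card (avoiding_words G v (fact M) (universal_length M) x))
             = real (fact M) ^ universal_length M * avoid_prob G v (universal_length M) x"
    by (rule card_avoiding_words[OF assms(1,3)])
  also have "\<dots> \<le> real (fact M) ^ universal_length M * (1 / 2) ^ (code_exponent M + 1)"
    unfolding universal_length_def by (intro mult_left_mono avoid_prob_geometric[OF assms]) auto
  finally show ?thesis by (simp add: power_one_over)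
qed

lemma universal_seq_exists:
  assumes "1 \<le> M"
  shows "\<exists>s. universal_seq M s"
proof -
  let ?L = "fact M" and ?T = "universal_length M"
  let ?F = "avoiding_family M (fact M) (universal_length M)"
  let ?b = "real ?L ^ ?T / 2 ^ (code_exponent M + 1)"
  have "\<exists>s \<in> words ?L ?T. s \<notin> \<Union>?F"
  proof (rule exists_not_in_Union[OF finite_words, where b = ?b])
    show "finite ?F" using avoiding_family_small[OF assms] by blast
    show "A \<subseteq> words ?L ?T \<and> real (card A) \<le> ?b" if "A \<in> ?F" for A
      using that card_avoiding_words_universal_length
      unfolding avoiding_family_def avoiding_words_def by blast
    have "real (card ?F) \<le> 2 ^ code_exponent M"
      using avoiding_family_small[OF assms] by (metis of_nat_le_iff of_nat_numeral of_nat_power)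
    then have "real (card ?F) * ?b \<le> 2 ^ code_exponent M * ?b"
      by (rule mult_right_mono) simp
    also have "\<dots> < real (card (words ?L ?T))" by (simp add: card_words)
    finally show "real (card ?F) * ?b < real (card (words ?L ?T))" .
  qed
  then obtain s where "s \<in> words ?L ?T" "s \<notin> \<Union>?F" by blast
  then have "universal_seq M s"
    unfolding universal_seq_def avoiding_family_def avoiding_words_def by blast
  then show ?thesis ..
qed

section \<open>Following a sequence\<close>

text \<open>The agent is only told the degree of its start node; afterwards the degree of the
current node is the last entry of the history.\<close>

definition follow_seq :: "(bool list \<Rightarrow> nat list) \<Rightarrow> algorithm" where
  "follow_seq \<sigma> adv d h =
     (let s = \<sigma> adv; cur = (if h = [] then d else snd (snd (last h)))
      in if length h < length s then Some (s ! length h mod cur) else None)"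

lemma follow_seq_walk_history:
  assumes "k < length (\<sigma> adv)"
  shows "follow_seq \<sigma> adv (pg_deg G v) (walk_history G v (take k (\<sigma> adv))) =
         Some (\<sigma> adv ! k mod pg_deg G (walk_end G v (take k (\<sigma> adv))))"
proof (cases "k = 0")
  case False
  then have "take k (\<sigma> adv) \<noteq> []" using assms by auto
  moreover from this have "walk_history G v (take k (\<sigma> adv)) \<noteq> []"
    by (metis length_0_conv length_walk_history)
  ultimately show ?thesis
    using assms last_walk_history_deg by (simp add: follow_seq_def Let_def)
qed (use assms in \<open>simp add: follow_seq_def\<close>)

lemma exec_follow_seq:
  assumes "k \<le> length (\<sigma> adv)"
  shows "exec (follow_seq \<sigma>) adv G v k =
         (walk_end G v (take k (\<sigma> adv)), walk_history G v (take k (\<sigma> adv)))"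
  using assms
proof (induction k)
  case (Suc k)
  then have k: "k < length (\<sigma> adv)" by simp
  then have "take (Suc k) (\<sigma> adv) = take k (\<sigma> adv) @ [\<sigma> adv ! k]"
    by (simp add: take_Suc_conv_app_nth)
  then show ?case
    using Suc.IH k follow_seq_walk_history[where \<sigma> = \<sigma> and adv = adv and k = k and G = G and v = v, OF k]
    by (simp add: walk_end_snoc walk_history_snoc walk_step_def)
qed simp

lemma follow_seq_explores:
  assumes G: "nontrivial_pgraph G" and v: "v < pg_n G"
    and covers: "\<forall>w < pg_n G. w \<in> set (walk_nodes G v (\<sigma> adv))"
  shows "explores_in (follow_seq \<sigma>) adv G v (length (\<sigma> adv))"
  unfolding explores_in_def
proof (intro conjI allI impI)
  let ?s = "\<sigma> adv"
  fix k assume k: "k < length ?s"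
  have "walk_end G v (take k ?s) < pg_n G" using walk_end_less[OF G v] .
  then show "\<exists>i. follow_seq \<sigma> adv (pg_deg G v) (snd (exec (follow_seq \<sigma>) adv G v k)) = Some i \<and>
                 i < pg_deg G (fst (exec (follow_seq \<sigma>) adv G v k))"
    using follow_seq_walk_history[where \<sigma> = \<sigma> and adv = adv and k = k and G = G and v = v, OF k]
      mod_pg_deg_less[OF G] exec_follow_seq[of k \<sigma> adv G v] k by simp
next
  let ?s = "\<sigma> adv"
  show "follow_seq \<sigma> adv (pg_deg G v) (snd (exec (follow_seq \<sigma>) adv G v (length ?s))) = None"
    using exec_follow_seq[of "length ?s" \<sigma> adv G v] by (simp add: follow_seq_def Let_def)
  have "{fst (exec (follow_seq \<sigma>) adv G v k) | k. k \<le> length ?s}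
        = {walk_end G v (take k ?s) | k. k \<le> length ?s}"
    using exec_follow_seq[of _ \<sigma> adv G v] by force
  also have "\<dots> = {..<pg_n G}"
    using set_walk_nodes walk_nodes_subset[OF G v] covers by blast
  finally show "{fst (exec (follow_seq \<sigma>) adv G v k) | k. k \<le> length ?s} = {..<pg_n G}" .
qed

section \<open>The advice\<close>

fun nat_to_bits :: "nat \<Rightarrow> bool list" where
  "nat_to_bits 0 = []"
| "nat_to_bits (Suc j) = odd (Suc j) # nat_to_bits (Suc j div 2)"

fun bits_to_nat :: "bool list \<Rightarrow> nat" where
  "bits_to_nat [] = 0"
| "bits_to_nat (b # bs) = (if b then 1 else 0) + 2 * bits_to_nat bs"

lemma bits_to_nat_to_bits [simp]: "bits_to_nat (nat_to_bits j) = j"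
  by (induction j rule: nat_to_bits.induct) auto

lemma length_nat_to_bits_le: "j < 2 ^ k \<Longrightarrow> length (nat_to_bits j) \<le> k"
proof (induction k arbitrary: j)
  case (Suc k)
  then show ?case by (cases j) auto
qed simp

lemma length_nat_to_bits_le_floor:
  assumes "0 \<le> y" "real j \<le> 2 powr (y - 1)"
  shows "real (length (nat_to_bits j)) \<le> of_int \<lfloor>y\<rfloor>"
proof -
  have "real j < 2 powr real_of_int \<lfloor>y\<rfloor>"
    using assms(2) powr_less_mono[of "y - 1" "real_of_int \<lfloor>y\<rfloor>" 2] by linarith
  also have "\<dots> = real (2 ^ nat \<lfloor>y\<rfloor>)"
    using assms(1) by (simp add: powr_realpow[symmetric])
  finally have "length (nat_to_bits j) \<le> nat \<lfloor>y\<rfloor>"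
    by (intro length_nat_to_bits_le) (simp only: of_nat_less_iff)
  then show ?thesis using assms(1) by linarith
qed

definition tower :: "nat \<Rightarrow> nat \<Rightarrow> nat" where
  "tower D j = 2 ^ 2 ^ (j * D)"

definition tower_index :: "nat \<Rightarrow> nat \<Rightarrow> nat" where
  "tower_index D n = (LEAST j. n \<le> tower D j)"

lemma tower_Suc: "tower D (Suc j) = tower D j ^ 2 ^ D"
proof -
  have "2 ^ (Suc j * D) = (2::nat) ^ (j * D) * 2 ^ D" by (simp add: power_add)
  then show ?thesis unfolding tower_def by (simp only: power_mult)
qed

lemma le_tower_index:
  assumes "1 \<le> D"
  shows "n \<le> tower D (tower_index D n)"
proof -
  have "n \<le> n * D" using assms by simp
  then have "n < 2 ^ (n * D)" using less_exp[of "n * D"] by linarith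
  have "n < 2 ^ n" by (rule less_exp)
  also have "\<dots> \<le> 2 ^ 2 ^ (n * D)"
    using \<open>n < 2 ^ (n * D)\<close> by (intro power_increasing) auto
  finally have "n \<le> tower D n" by (simp add: tower_def)
  then show ?thesis unfolding tower_index_def by (rule LeastI)
qed

lemma tower_index_pos: "1 \<le> D \<Longrightarrow> 2 < n \<Longrightarrow> 0 < tower_index D n"
  using le_tower_index[of D n] by (cases "tower_index D n") (auto simp: tower_def)

lemma tower_pred_tower_index_less:
  "1 \<le> D \<Longrightarrow> 2 < n \<Longrightarrow> tower D (tower_index D n - 1) < n"
  using not_less_Least[of "tower_index D n - 1" "\<lambda>j. n \<le> tower D j"] tower_index_pos[of D n]
  unfolding tower_index_def by simp

lemma tower_tower_index_le:
  assumes "1 \<le> D" "2 < n"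
  shows "tower D (tower_index D n) \<le> n ^ 2 ^ D"
proof -
  have "tower D (tower_index D n) = tower D (tower_index D n - 1) ^ 2 ^ D"
    using tower_index_pos[OF assms]
    by (cases "tower_index D n") (simp_all add: tower_Suc)
  also have "\<dots> \<le> n ^ 2 ^ D"
    using tower_pred_tower_index_less[OF assms] by (intro power_mono) auto
  finally show ?thesis .
qed

text \<open>If \<open>2^2^m < n\<close> then \<open>m < log log n\<close>; with \<open>m = (j - 1) D\<close> this gives
\<open>j \<le> 2 log log n / 2^(c+2) = 2^(log log log n - c - 1)\<close>.\<close>

lemma length_bits_below_tower:
  fixes c :: real
  assumes c: "c > 0" and D: "real D \<ge> 2 powr (c + 2)"
    and n: "real n \<ge> 2 powr (2 powr (2 powr (c + 2)))"
    and j: "tower D (j - 1) < n"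
  shows "real (length (nat_to_bits j)) \<le> of_int \<lfloor>log 2 (log 2 (log 2 (real n))) - c\<rfloor>"
proof -
  define a where "a = 2 powr (c + 2)"
  define L2 where "L2 = log 2 (log 2 (real n))"
  have "0 < a" unfolding a_def by simp
  have "0 < real n" using n powr_gt_zero[of 2 "2 powr 2 powr (c + 2)"] by linarith
  then have L1: "2 powr a \<le> log 2 (real n)"
    using n by (simp add: a_def le_log_iff)
  then have "0 < log 2 (real n)" using powr_gt_zero[of 2 a] by linarith
  then have "L2 \<ge> a" using L1 unfolding L2_def by (subst le_log_iff) auto
  then have L2: "L2 \<ge> a" "0 < L2" using \<open>0 < a\<close> by simp_all
  have L3: "log 2 L2 \<ge> c + 2"
    using L2 by (subst le_log_iff) (auto simp: a_def)
  have "real (2 ^ 2 ^ ((j - 1) * D)) < real n" using j unfolding tower_def by linarith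
  then have "log 2 (real (2 ^ 2 ^ ((j - 1) * D))) < log 2 (real n)"
    by (subst log_less_cancel_iff) auto
  then have "real (2 ^ ((j - 1) * D)) < log 2 (real n)" by (simp add: log_nat_power)
  then have "log 2 (real (2 ^ ((j - 1) * D))) < L2"
    unfolding L2_def using \<open>0 < log 2 (real n)\<close> by (subst log_less_cancel_iff) auto
  then have "real (j - 1) * real D < L2" by (simp add: log_nat_power)
  also have "\<dots> \<le> L2 / a * real D"
    using D L2 \<open>0 < a\<close> by (simp add: a_def field_simps)
  finally have "real (j - 1) < L2 / a"
    by (rule mult_right_less_imp_less) simp
  then have "a * real (j - 1) < L2" using \<open>0 < a\<close> by (simp add: field_simps)
  moreover have "a * real j \<le> a * (real (j - 1) + 1)"
    using \<open>0 < a\<close> by (intro mult_left_mono) linarith+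
  ultimately have "a * real j \<le> 2 * L2" using L2 by (simp add: algebra_simps)
  then have "real j \<le> 2 * L2 / a" using \<open>0 < a\<close> by (simp add: field_simps)
  also have "\<dots> = 2 powr (log 2 L2 - c - 1)"
    using L2 by (simp add: a_def powr_diff powr_add)
  finally show ?thesis
    unfolding L2_def[symmetric]
    by (intro length_nat_to_bits_le_floor) (use L3 in \<open>simp_all add: diff_diff_add\<close>)
qed

lemma universal_length_le:
  assumes "1 \<le> M"
  shows "universal_length M \<le> 12 * M ^ 9"
proof -
  have "M \<le> M ^ 3" "M ^ 2 \<le> M ^ 3" "1 \<le> M ^ 3"
    using power_increasing[of 1 3 M] power_increasing[of 2 3 M] assms by simp_all
  moreover have "code_exponent M + 1 = M ^ 3 + M ^ 2 + 3 * M + 1"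
    unfolding code_exponent_def by (simp add: power2_eq_square power3_eq_cube algebra_simps)
  ultimately have "code_exponent M + 1 \<le> 6 * M ^ 3" by linarith
  then have "universal_length M \<le> 6 * M ^ 3 * (2 * M ^ 6)"
    unfolding universal_length_def halving_time_def by (rule mult_le_mono1)
  also have "\<dots> = 12 * M ^ 9" by (simp flip: power_add)
  finally show ?thesis .
qed

definition universal_seq_of :: "nat \<Rightarrow> nat list" where
  "universal_seq_of M = (SOME s. universal_seq M s)"

definition advice_oracle :: "nat \<Rightarrow> pgraph \<Rightarrow> bool list" where
  "advice_oracle D G = nat_to_bits (tower_index D (pg_n G))"

definition explorer :: "nat \<Rightarrow> algorithm" where
  "explorer D = follow_seq (\<lambda>adv. universal_seq_of (tower D (bits_to_nat adv)))"

lemma explorer_explores: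
  assumes D: "1 \<le> D" and G: "valid_pgraph G" "2 < pg_n G" and v: "v < pg_n G"
  shows "explores_in (explorer D) (advice_oracle D G) G v (universal_length (tower D (tower_index D (pg_n G))))"
proof -
  define M where "M = tower D (tower_index D (pg_n G))"
  have "pg_n G \<le> M" unfolding M_def using le_tower_index[OF D] .
  moreover have "universal_seq M (universal_seq_of M)"
    unfolding universal_seq_of_def
    by (rule someI_ex[OF universal_seq_exists]) (use G \<open>pg_n G \<le> M\<close> in linarith)
  ultimately have "length (universal_seq_of M) = universal_length M"
    and "\<forall>w < pg_n G. w \<in> set (walk_nodes G v (universal_seq_of M))"
    using G v unfolding universal_seq_def words_def by auto
  then show ?thesis
    using follow_seq_explores[of G v "\<lambda>adv. universal_seq_of (tower D (bits_to_nat adv))"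
        "advice_oracle D G"] G v
    unfolding explorer_def advice_oracle_def M_def by simp
qed

lemma universal_length_tower_index_le:
  assumes "1 \<le> D" "2 < n"
  shows "real (universal_length (tower D (tower_index D n))) \<le> poly (monom 12 (9 * 2 ^ D)) (real n)"
proof -
  let ?M = "tower D (tower_index D n)"
  have "universal_length ?M \<le> 12 * ?M ^ 9"
    using universal_length_le le_tower_index[OF assms(1), of n] assms(2) by simp
  also have "\<dots> \<le> 12 * (n ^ 2 ^ D) ^ 9"
    using tower_tower_index_le[OF assms] by (intro mult_le_mono2 power_mono) auto
  also have "\<dots> = 12 * n ^ (9 * 2 ^ D)"
    by (simp add: power_mult[symmetric] mult.commute)
  finally show ?thesis
    by (simp add: poly_monom) (metis of_nat_le_iff of_nat_mult of_nat_numeral of_nat_power)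
qed

theorem mainTheorem1:
  fixes c :: real
  assumes "c > 0"
  shows "\<exists>(f :: pgraph \<Rightarrow> bool list) (A :: algorithm) (Q :: real poly) N.
           \<forall>n \<ge> N. \<forall>G. valid_pgraph G \<and> pg_n G = n \<longrightarrow>
              real (length (f G)) \<le> of_int \<lfloor>log 2 (log 2 (log 2 (real n))) - c\<rfloor> \<and>
              (\<forall>v < n. \<exists>T. real T \<le> poly Q (real n) \<and> explores_in A (f G) G v T)"
proof -
  define D where "D = nat \<lceil>2 powr (c + 2)\<rceil>"
  define N where "N = nat \<lceil>2 powr (2 powr (2 powr (c + 2)))\<rceil> + 3"
  have D: "real D \<ge> 2 powr (c + 2)" "1 \<le> D"
    unfolding D_def using powr_gt_zero[of 2 "c + 2"] by linarith+
  have "real (length (advice_oracle D G)) \<le> of_int \<lfloor>log 2 (log 2 (log 2 (real n))) - c\<rfloor> \<and>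
        (\<forall>v < n. \<exists>T. real T \<le> poly (monom 12 (9 * 2 ^ D)) (real n) \<and>
                     explores_in (explorer D) (advice_oracle D G) G v T)"
    if "n \<ge> N" "valid_pgraph G" "pg_n G = n" for n G
  proof -
    have "2 < n" "real n \<ge> 2 powr (2 powr (2 powr (c + 2)))"
      using \<open>n \<ge> N\<close> unfolding N_def by linarith+
    then show ?thesis
      using length_bits_below_tower[OF assms D(1)] tower_pred_tower_index_less[OF D(2)]
        explorer_explores[OF D(2)] universal_length_tower_index_le[OF D(2)] that
      unfolding advice_oracle_def by blast
  qed
  then show ?thesis by blast
qed

end
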